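(* Let $\mathfrak g$ be a finite-dimensional complex simple Lie algebra and $q\in\mathbb C^\times$ not a root of unity. (i) For all $w\in W$ and $\boldsymbol\varpi\in\mathcal P_q$, $\mathrm{wt}(T_w\boldsymbol\varpi)=w(\mathrm{wt}(\boldsymbol\varpi))$. (ii) Suppose $\boldsymbol\varpi_1,\boldsymbol\varpi_2\in\mathcal P_q$ satisfy $\mathrm{wt}(\boldsymbol\varpi_r)\in P^+$ for $r=1,2$, and $w_1,w_2\in W$. If $T_{w_1}\boldsymbol\varpi_1=T_{w_2}\boldsymbol\varpi_2$ then $\mathrm{wt}(\boldsymbol\varpi_1)=\mathrm{wt}(\boldsymbol\varpi_2)$, and, setting $\lambda=\mathrm{wt}(\boldsymbol\varpi_1)$, $w_1^{-1}w_2\in W(\lambda)$.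
   Context: $I=\{1,\dots,n\}$, $(a_{ij})$ the Cartan matrix of $\mathfrak g$, $\omega_i$ the fundamental weights, $\check\alpha_i$ simple coroots, $P$ the weight lattice, $P^+$ dominant weights, $W$ the Weyl group with simple reflections $s_i$; for $\lambda\in P^+$, $W(\lambda)$ is the subgroup generated by $\{s_i:\lambda(\check\alpha_i)=0\}$. $d_i$ positive integers with $(d_ia_{ij})$ symmetric, $q_i=q^{d_i}$. $\mathcal P_q=\mathbb A^n$ with $\mathbb A$ the multiplicative group of rational functions with value 1 at $u=0$; $\boldsymbol\omega_{i,a}$ has $i$-th entry $1-au$ and others $1$ (these freely generate $\mathcal P_q$); $\mathrm{wt}:\mathcal P_q\to P$ is the homomorphism with $\mathrm{wt}(\boldsymbol\omega_{i,a})=\omega_i$. Braid action: $(T_i\boldsymbol\varpi)_j=\varpi_j$ if $a_{ji}=0$; $\varpi_j(u)\varpi_i(q_iu)$ if $a_{ji}=-1$; $\varpi_j(u)\varpi_i(q^3u)\varpi_i(qu)$ if $a_{ji}=-2$; $\varpi_j(u)\varpi_i(q^5u)\varpi_i(q^3u)\varpi_i(qu)$ if $a_{ji}=-3$; $(T_i\boldsymbol\varpi)_i=1/\varpi_i(q_i^2u)$; $T_w=T_{i_1}\cdots T_{i_k}$ for a reduced expression $w=s_{i_1}\cdots s_{i_k}$. *)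

theory Defs
  imports "HOL-Computational_Algebra.Polynomial_Factorial"
          "HOL-Computational_Algebra.Normalized_Fraction"
          "HOL-Computational_Algebra.Field_as_Ring"
begin

text \<open>Index set I = UNIV of a finite type 'i.  A Cartan matrix A :: 'i => 'i => int,
  convention a_ij = alpha_j(coroot_i), so alpha_i(coroot_j) = a_ji.\<close>

definition symmetrizes :: "('i \<Rightarrow> 'i \<Rightarrow> int) \<Rightarrow> ('i \<Rightarrow> nat) \<Rightarrow> bool" where
  "symmetrizes A d \<longleftrightarrow> (\<forall>i. d i > 0) \<and> (\<forall>i j. int (d i) * A i j = int (d j) * A j i)"

text \<open>Cartan matrix of a finite-dimensional complex simple Lie algebra: an indecomposable
  generalized Cartan matrix whose symmetrization (d_i a_ij) is positive definite
  (finite type).\<close>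
definition simple_cartan :: "('i::finite \<Rightarrow> 'i \<Rightarrow> int) \<Rightarrow> ('i \<Rightarrow> nat) \<Rightarrow> bool" where
  "simple_cartan A d \<longleftrightarrow>
     (\<forall>i. A i i = 2) \<and> (\<forall>i j. i \<noteq> j \<longrightarrow> A i j \<le> 0) \<and>
     (\<forall>i j. A i j = 0 \<longleftrightarrow> A j i = 0) \<and>
     (\<forall>J. J \<noteq> {} \<and> J \<noteq> UNIV \<longrightarrow> (\<exists>i\<in>J. \<exists>j. j \<notin> J \<and> A i j \<noteq> 0)) \<and>
     symmetrizes A d \<and>
     (\<forall>x :: 'i \<Rightarrow> real. (\<exists>i. x i \<noteq> 0) \<longrightarrow>
        (\<Sum>i\<in>UNIV. \<Sum>j\<in>UNIV. x i * real (d i) * of_int (A i j) * x j) > 0)"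

text \<open>Weights: lambda in P is encoded by its coordinates lambda(coroot_i) in the basis of
  fundamental weights.\<close>
type_synonym 'i weight = "'i \<Rightarrow> int"

definition dominant :: "'i weight \<Rightarrow> bool" where
  "dominant la \<longleftrightarrow> (\<forall>i. la i \<ge> 0)"

text \<open>Simple reflection: s_i lambda = lambda - lambda(coroot_i) alpha_i.\<close>
definition srefl :: "('i \<Rightarrow> 'i \<Rightarrow> int) \<Rightarrow> 'i \<Rightarrow> 'i weight \<Rightarrow> 'i weight" where
  "srefl A i la = (\<lambda>j. la j - la i * A j i)"

definition weyl_act :: "('i \<Rightarrow> 'i \<Rightarrow> int) \<Rightarrow> 'i list \<Rightarrow> 'i weight \<Rightarrow> 'i weight" where
  "weyl_act A ws = foldr (\<lambda>i f. srefl A i \<circ> f) ws id"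

definition reduced_word :: "('i \<Rightarrow> 'i \<Rightarrow> int) \<Rightarrow> 'i list \<Rightarrow> bool" where
  "reduced_word A ws \<longleftrightarrow> (\<forall>vs. weyl_act A vs = weyl_act A ws \<longrightarrow> length ws \<le> length vs)"

definition in_stab_subgroup :: "('i \<Rightarrow> 'i \<Rightarrow> int) \<Rightarrow> 'i weight \<Rightarrow> 'i list \<Rightarrow> bool" where
  "in_stab_subgroup A la ws \<longleftrightarrow>
     (\<exists>vs. set vs \<subseteq> {i. la i = 0} \<and> weyl_act A vs = weyl_act A ws)"

type_synonym ratfun = "complex poly fract"

definition in_A :: "ratfun \<Rightarrow> bool" where
  "in_A f \<longleftrightarrow> (case quot_of_fract f of (p, r) \<Rightarrow> poly r 0 \<noteq> 0 \<and> poly p 0 = poly r 0)"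

definition rsubst :: "complex \<Rightarrow> ratfun \<Rightarrow> ratfun" where
  "rsubst c f = (case quot_of_fract f of (p, r) \<Rightarrow>
      quot_to_fract (pcompose p [:0, c:], pcompose r [:0, c:]))"

type_synonym 'i lweight = "'i \<Rightarrow> ratfun"

definition in_Pq :: "'i lweight \<Rightarrow> bool" where
  "in_Pq \<pi> \<longleftrightarrow> (\<forall>i. in_A (\<pi> i))"

text \<open>wt: the homomorphism with wt(omega_{i,a}) = omega_i; on A it is (deg numerator - deg
  denominator) in each component.\<close>
definition wt :: "'i lweight \<Rightarrow> 'i weight" where
  "wt \<pi> = (\<lambda>i. case quot_of_fract (\<pi> i) of (p, r) \<Rightarrow> int (degree p) - int (degree r))"

definition braid_T :: "('i \<Rightarrow> 'i \<Rightarrow> int) \<Rightarrow> ('i \<Rightarrow> nat) \<Rightarrow> complex \<Rightarrow> 'i \<Rightarrow> 'i lweight \<Rightarrow> 'i lweight" where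
  "braid_T A d q i \<pi> = (\<lambda>j.
     if j = i then inverse (rsubst (q ^ (2 * d i)) (\<pi> i))
     else if A j i = -1 then \<pi> j * rsubst (q ^ d i) (\<pi> i)
     else if A j i = -2 then \<pi> j * rsubst (q ^ 3) (\<pi> i) * rsubst q (\<pi> i)
     else if A j i = -3 then \<pi> j * rsubst (q ^ 5) (\<pi> i) * rsubst (q ^ 3) (\<pi> i) * rsubst q (\<pi> i)
     else \<pi> j)"

definition braid_Tw :: "('i \<Rightarrow> 'i \<Rightarrow> int) \<Rightarrow> ('i \<Rightarrow> nat) \<Rightarrow> complex \<Rightarrow> 'i list \<Rightarrow> 'i lweight \<Rightarrow> 'i lweight" where
  "braid_Tw A d q ws = foldr (\<lambda>i f. braid_T A d q i \<circ> f) ws id"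

end

theory Submission
  imports Defs
begin

text \<open>
  Part (i) is a degree count: \<open>T\<^sub>i\<close> inverts the \<open>i\<close>-th component and multiplies the \<open>j\<close>-th one
  by \<open>-a\<^sub>j\<^sub>i\<close> rescaled copies of the \<open>i\<close>-th, which on degrees is the simple reflection \<open>s\<^sub>i\<close>.

  By (i), part (ii) reduces to: if \<open>\<lambda>\<close> and \<open>w\<lambda>\<close> are both dominant, then \<open>w\<lambda> = \<lambda>\<close> and
  \<open>w \<in> W(\<lambda>)\<close>. If \<open>w = w' s\<^sub>i\<close> is reduced, then \<open>w(\<alpha>\<^sub>i\<^sup>\<vee>)\<close> is a nonpositive combination of
  simple coroots, so \<open>\<lambda>(\<alpha>\<^sub>i\<^sup>\<vee>) = (w\<lambda>)(w(\<alpha>\<^sub>i\<^sup>\<vee>)) \<le> 0\<close>; hence \<open>s\<^sub>i\<close> fixes \<open>\<lambda>\<close> and one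
  continues with \<open>w'\<close>. That \<open>w(\<alpha>\<^sub>s\<^sup>\<vee>) \<ge> 0\<close> whenever \<open>s\<close> does not shorten \<open>w\<close> is proved as in
  Humphreys, Reflection Groups and Coxeter Groups, 5.4: by induction on the length of \<open>w\<close>,
  reducing to the dihedral subgroups \<open>\<langle>s\<^sub>s, s\<^sub>t\<rangle>\<close>, where it is a finite computation in each
  of the rank two types \<open>A\<^sub>1\<times>A\<^sub>1, A\<^sub>2, B\<^sub>2, G\<^sub>2\<close>. Positive definiteness of \<open>(d\<^sub>i a\<^sub>i\<^sub>j)\<close> is what
  restricts \<open>a\<^sub>s\<^sub>t a\<^sub>t\<^sub>s\<close> to \<open>{0, 1, 2, 3}\<close>.
\<close>

section \<open>Cartan matrices of finite type\<close>

lemma simple_cartan_diag: "simple_cartan A d \<Longrightarrow> A i i = 2"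
  unfolding simple_cartan_def by simp

lemma simple_cartan_symmetrizes: "simple_cartan A d \<Longrightarrow> symmetrizes A d"
  unfolding simple_cartan_def by simp

lemma sum_UNIV_two:
  fixes g :: "'i::finite \<Rightarrow> 'b::comm_monoid_add"
  assumes "i \<noteq> j" "\<And>k. k \<noteq> i \<Longrightarrow> k \<noteq> j \<Longrightarrow> g k = 0"
  shows "(\<Sum>k\<in>UNIV. g k) = g i + g j"
proof -
  have "(\<Sum>k\<in>UNIV. g k) = (\<Sum>k\<in>{i,j}. g k)"
    by (rule sum.mono_neutral_right) (auto intro: assms(2))
  thus ?thesis using assms(1) by simp
qed

text \<open>Evaluate the quadratic form at \<open>2 d\<^sub>j \<alpha>\<^sub>i - d\<^sub>i a\<^sub>i\<^sub>j \<alpha>\<^sub>j\<close>: its value is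
  \<open>2 d\<^sub>i d\<^sub>j\<^sup>2 (4 - a\<^sub>i\<^sub>j a\<^sub>j\<^sub>i)\<close>.\<close>
lemma simple_cartan_offdiag_product_lt_4:
  fixes A :: "'i::finite \<Rightarrow> 'i \<Rightarrow> int"
  assumes sc: "simple_cartan A d" and ij: "i \<noteq> j"
  shows "A i j * A j i < 4"
proof (rule ccontr)
  define a b :: real where "a = A i j" and "b = A j i"
  define di dj :: real where "di = d i" and "dj = d j"
  assume "\<not> ?thesis"
  hence ge: "a * b \<ge> 4" unfolding a_def b_def
    by (metis not_less of_int_le_iff of_int_mult of_int_numeral)
  have "symmetrizes A d" using sc by (rule simple_cartan_symmetrizes)
  hence dpos: "di > 0" "dj > 0" and sym: "di * a = dj * b"
    unfolding symmetrizes_def di_def dj_def a_def b_def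
    by (simp_all, metis of_int_mult of_int_of_nat_eq)
  define x :: "'i \<Rightarrow> real" where "x = (\<lambda>k. if k = i then 2 * dj else if k = j then - di * a else 0)"
  have "x j \<noteq> 0" using ij dpos ge by (auto simp: x_def)
  hence pos: "(\<Sum>k\<in>UNIV. \<Sum>l\<in>UNIV. x k * real (d k) * of_int (A k l) * x l) > 0"
    using sc unfolding simple_cartan_def by blast
  have inner: "(\<Sum>l\<in>UNIV. x k * real (d k) * of_int (A k l) * x l)
      = x k * real (d k) * of_int (A k i) * x i + x k * real (d k) * of_int (A k j) * x j" for k
    by (rule sum_UNIV_two[OF ij]) (simp add: x_def)
  have "(\<Sum>k\<in>UNIV. \<Sum>l\<in>UNIV. x k * real (d k) * of_int (A k l) * x l)
     = 2 * di * (2 * dj)\<^sup>2 - 2 * dj * (di * a)\<^sup>2 - di * a * dj * b * 2 * dj + 2 * dj * (di * a)\<^sup>2"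
    unfolding inner using ij simple_cartan_diag[OF sc]
    by (subst sum_UNIV_two[OF ij]) (simp_all add: x_def a_def b_def di_def dj_def algebra_simps power2_eq_square)
  also have "\<dots> = 2 * di * dj * dj * (4 - a * b)"
    using sym by (simp add: algebra_simps power2_eq_square)
  also have "\<dots> \<le> 0"
    using ge dpos by (intro mult_nonneg_nonpos) auto
  finally show False using pos by simp
qed

lemma simple_cartan_offdiag_cases:
  fixes A :: "'i::finite \<Rightarrow> 'i \<Rightarrow> int"
  assumes sc: "simple_cartan A d" and ij: "i \<noteq> j"
  shows "(A i j = 0 \<and> A j i = 0) \<or> (A i j = -1 \<and> A j i = -1) \<or> (A i j = -1 \<and> A j i = -2)
     \<or> (A i j = -2 \<and> A j i = -1) \<or> (A i j = -1 \<and> A j i = -3) \<or> (A i j = -3 \<and> A j i = -1)"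
proof -
  have prod: "A i j * A j i < 4" by (rule simple_cartan_offdiag_product_lt_4[OF sc ij])
  have sign: "A i j \<le> 0" "A j i \<le> 0" "A i j = 0 \<longleftrightarrow> A j i = 0"
    using sc ij unfolding simple_cartan_def by auto
  have "- a \<le> a * b" if "a \<le> 0" "b \<le> -1" for a b :: int
    using mult_left_mono_neg[OF that(2) that(1)] by simp
  hence "A i j \<ge> -3" "A j i \<ge> -3"
    using prod sign by (smt (verit) mult.commute)+
  hence "A i j \<in> {-3, -2, -1, 0}" "A j i \<in> {-3, -2, -1, 0}" using sign by auto
  thus ?thesis using prod sign by auto
qed

section \<open>Words in the Weyl group\<close>

lemma weyl_act_Nil [simp]: "weyl_act A [] = id"
  by (simp add: weyl_act_def)

lemma weyl_act_Cons [simp]: "weyl_act A (i # ws) = srefl A i \<circ> weyl_act A ws"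
  by (simp add: weyl_act_def)

lemma weyl_act_append: "weyl_act A (xs @ ys) = weyl_act A xs \<circ> weyl_act A ys"
  by (induction xs) auto

lemma srefl_srefl: "A i i = 2 \<Longrightarrow> srefl A i (srefl A i la) = la"
  unfolding srefl_def by (auto simp: algebra_simps)

lemma weyl_act_cancel_square:
  "A z z = 2 \<Longrightarrow> weyl_act A (xs @ [z, z] @ ys) = weyl_act A (xs @ ys)"
  by (auto simp: weyl_act_append srefl_srefl fun_eq_iff)

lemma weyl_act_rev_inverse:
  assumes "\<forall>i. A i i = 2"
  shows "weyl_act A ws (weyl_act A (rev ws) la) = la"
    and "weyl_act A (rev ws) (weyl_act A ws la) = la"
proof -
  show rinv: "weyl_act A ws (weyl_act A (rev ws) la) = la" for ws la
    using assms by (induction ws arbitrary: la) (simp_all add: weyl_act_append srefl_srefl)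
  show "weyl_act A (rev ws) (weyl_act A ws la) = la"
    using rinv[of "rev ws"] by simp
qed

lemma weyl_act_rev_cong:
  assumes "\<forall>i. A i i = 2" "weyl_act A ws = weyl_act A vs"
  shows "weyl_act A (rev ws) = weyl_act A (rev vs)"
proof
  fix la
  have "weyl_act A (rev ws) la = weyl_act A (rev ws) (weyl_act A vs (weyl_act A (rev vs) la))"
    using weyl_act_rev_inverse[of A, OF assms(1)] by simp
  also have "\<dots> = weyl_act A (rev vs) la"
    using weyl_act_rev_inverse[of A, OF assms(1)] assms(2) by metis
  finally show "weyl_act A (rev ws) la = weyl_act A (rev vs) la" .
qed

definition word_length :: "('i \<Rightarrow> 'i \<Rightarrow> int) \<Rightarrow> 'i set \<Rightarrow> ('i weight \<Rightarrow> 'i weight) \<Rightarrow> nat" where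
  "word_length A X f = (LEAST n. \<exists>vs. set vs \<subseteq> X \<and> length vs = n \<and> weyl_act A vs = f)"

abbreviation weyl_length :: "('i \<Rightarrow> 'i \<Rightarrow> int) \<Rightarrow> 'i list \<Rightarrow> nat" where
  "weyl_length A ws \<equiv> word_length A UNIV (weyl_act A ws)"

lemma word_length_le: "set vs \<subseteq> X \<Longrightarrow> weyl_act A vs = f \<Longrightarrow> word_length A X f \<le> length vs"
  unfolding word_length_def by (rule Least_le) blast

lemma shortest_word_exists:
  assumes "set u \<subseteq> X"
  obtains vs where "set vs \<subseteq> X" "length vs = word_length A X (weyl_act A u)"
    "weyl_act A vs = weyl_act A u"
proof -
  have "\<exists>vs. set vs \<subseteq> X \<and> length vs = word_length A X (weyl_act A u) \<and> weyl_act A vs = weyl_act A u"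
    unfolding word_length_def by (rule LeastI_ex) (use assms in blast)
  thus ?thesis using that by blast
qed

lemma weyl_length_le_word_length:
  assumes "set u \<subseteq> X"
  shows "weyl_length A u \<le> word_length A X (weyl_act A u)"
proof -
  obtain vs where "length vs = word_length A X (weyl_act A u)" "weyl_act A vs = weyl_act A u"
    using shortest_word_exists[OF assms] by metis
  thus ?thesis using word_length_le[of vs UNIV A] by simp
qed

lemma weyl_length_append: "weyl_length A (xs @ ys) \<le> weyl_length A xs + weyl_length A ys"
proof -
  obtain a where a: "length a = weyl_length A xs" "weyl_act A a = weyl_act A xs"
    using shortest_word_exists[of xs UNIV] by blast
  obtain b where b: "length b = weyl_length A ys" "weyl_act A b = weyl_act A ys"
    using shortest_word_exists[of ys UNIV] by blast
  have "weyl_length A (xs @ ys) \<le> length (a @ b)"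
    using a b by (intro word_length_le) (simp_all add: weyl_act_append)
  thus ?thesis using a b by simp
qed

lemma word_length_Cons_le:
  assumes "set u \<subseteq> X" "x \<in> X"
  shows "word_length A X (weyl_act A (x # u)) \<le> word_length A X (weyl_act A u) + 1"
proof -
  obtain vs where vs: "set vs \<subseteq> X" "length vs = word_length A X (weyl_act A u)"
      "weyl_act A vs = weyl_act A u"
    using shortest_word_exists[OF assms(1)] by blast
  have "word_length A X (weyl_act A (x # u)) \<le> length (x # vs)"
    using vs assms(2) by (intro word_length_le) auto
  thus ?thesis using vs(2) by simp
qed

definition stutter_free :: "'a list \<Rightarrow> bool" where
  "stutter_free u \<longleftrightarrow> (\<forall>a b z. u \<noteq> a @ [z, z] @ b)"

lemma stutter_free_snocD: "stutter_free (u @ [z]) \<Longrightarrow> stutter_free u"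
  unfolding stutter_free_def by (metis append.assoc)

lemma shortest_word_stutter_free:
  assumes diag: "\<forall>i. A i i = 2" and "set u \<subseteq> X" and shortest: "length u = word_length A X (weyl_act A u)"
  shows "stutter_free u"
  unfolding stutter_free_def
proof (intro allI notI)
  fix a b z
  assume u: "u = a @ [z, z] @ b"
  have "weyl_act A (a @ b) = weyl_act A u"
    using weyl_act_cancel_square[of A z a b] diag u by simp
  hence "word_length A X (weyl_act A u) \<le> length (a @ b)"
    using \<open>set u \<subseteq> X\<close> u by (intro word_length_le) auto
  thus False using shortest u by simp
qed

section \<open>Degrees of rational functions and the braid group action\<close>

definition fract_degree :: "ratfun \<Rightarrow> int" where
  "fract_degree f = (case quot_of_fract f of (p, r) \<Rightarrow> int (degree p) - int (degree r))"

lemma wt_eq_fract_degree: "wt \<pi> i = fract_degree (\<pi> i)"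
  unfolding wt_def fract_degree_def by simp

lemma Fract_nonzero: "a \<noteq> 0 \<Longrightarrow> b \<noteq> 0 \<Longrightarrow> Fract a b \<noteq> (0::'a::idom fract)"
  by (simp add: Zero_fract_def eq_fract)

lemma quot_of_fractD:
  assumes "quot_of_fract f = (p, r)"
  shows "r \<noteq> 0" and "p = 0 \<longleftrightarrow> f = 0" and "f = Fract p r"
  using snd_quot_of_fract_nonzero[of f] fst_quot_of_fract_eq_0_iff[of f] Fract_quot_of_fract[of f] assms
  by simp_all

lemma fract_degree_Fract:
  fixes a b :: "complex poly"
  assumes "a \<noteq> 0" "b \<noteq> 0"
  shows "fract_degree (Fract a b) = int (degree a) - int (degree b)"
proof -
  obtain p r where pr: "quot_of_fract (Fract a b) = (p, r)" by fastforce
  note pr' = quot_of_fractD[OF pr]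
  have "p \<noteq> 0" using pr'(2) Fract_nonzero[OF assms] by simp
  have "p * b = a * r" using pr'(1,3) assms eq_fract(1) by metis
  hence "degree p + degree b = degree a + degree r"
    using \<open>p \<noteq> 0\<close> pr'(1) assms by (metis degree_mult_eq)
  thus ?thesis unfolding fract_degree_def pr by simp
qed

lemma nonzero_fract_cases:
  fixes f :: ratfun
  assumes "f \<noteq> 0"
  obtains a b where "a \<noteq> 0" "b \<noteq> 0" "f = Fract a b"
proof -
  obtain p r where pr: "quot_of_fract f = (p, r)" by fastforce
  with assms that show ?thesis using quot_of_fractD[OF pr] by blast
qed

lemma fract_degree_mult:
  fixes f g :: ratfun
  assumes "f \<noteq> 0" "g \<noteq> 0"
  shows "fract_degree (f * g) = fract_degree f + fract_degree g"
  using assms by (elim nonzero_fract_cases) (simp add: fract_degree_Fract degree_mult_eq)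

lemma fract_degree_inverse:
  fixes f :: ratfun
  assumes "f \<noteq> 0"
  shows "fract_degree (inverse f) = - fract_degree f"
  using assms by (elim nonzero_fract_cases) (simp add: fract_degree_Fract)

lemma
  fixes f :: ratfun
  assumes "f \<noteq> 0" "c \<noteq> 0"
  shows fract_degree_rsubst: "fract_degree (rsubst c f) = fract_degree f"
    and rsubst_nonzero: "rsubst c f \<noteq> 0"
proof -
  obtain p r where pr: "quot_of_fract f = (p, r)" by fastforce
  note pr' = quot_of_fractD[OF pr]
  have deg: "degree [:0, c:] = 1" using assms by simp
  have nz: "p \<circ>\<^sub>p [:0, c:] \<noteq> 0" "r \<circ>\<^sub>p [:0, c:] \<noteq> 0"
    using pcompose_eq_0[of _ "[:0, c:]"] pr' assms deg by auto
  have rs: "rsubst c f = Fract (p \<circ>\<^sub>p [:0, c:]) (r \<circ>\<^sub>p [:0, c:])"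
    unfolding rsubst_def pr quot_to_fract_def by simp
  show "rsubst c f \<noteq> 0" unfolding rs using nz by (rule Fract_nonzero)
  show "fract_degree (rsubst c f) = fract_degree f"
    unfolding rs fract_degree_Fract[OF nz] using deg by (simp add: degree_pcompose fract_degree_def pr)
qed

lemma in_A_nonzero: "in_A f \<Longrightarrow> f \<noteq> 0"
  unfolding in_A_def by (cases "quot_of_fract f") auto

lemma wt_braid_T:
  assumes diag: "A i i = 2" and offdiag: "\<And>j. j \<noteq> i \<Longrightarrow> A j i \<in> {0, -1, -2, -3}"
    and "q \<noteq> 0" and nz: "\<forall>j. \<pi> j \<noteq> 0"
  shows "\<forall>j. braid_T A d q i \<pi> j \<noteq> 0" and "wt (braid_T A d q i \<pi>) = srefl A i (wt \<pi>)"
proof -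
  have twist: "rsubst (q ^ n) (\<pi> i) \<noteq> 0" "fract_degree (rsubst (q ^ n) (\<pi> i)) = fract_degree (\<pi> i)"
    "rsubst q (\<pi> i) \<noteq> 0" "fract_degree (rsubst q (\<pi> i)) = fract_degree (\<pi> i)" for n
    using rsubst_nonzero fract_degree_rsubst nz \<open>q \<noteq> 0\<close> by simp_all
  have "braid_T A d q i \<pi> j \<noteq> 0 \<and> fract_degree (braid_T A d q i \<pi> j) = srefl A i (wt \<pi>) j" for j
  proof (cases "j = i")
    case True
    thus ?thesis using twist nz
      by (simp add: braid_T_def srefl_def wt_eq_fract_degree diag fract_degree_inverse)
  next
    case False
    thus ?thesis using offdiag[OF False] twist nz
      by (auto simp: braid_T_def srefl_def wt_eq_fract_degree fract_degree_mult)
  qed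
  thus "\<forall>j. braid_T A d q i \<pi> j \<noteq> 0" "wt (braid_T A d q i \<pi>) = srefl A i (wt \<pi>)"
    by (auto simp: wt_eq_fract_degree)
qed

lemma braid_Tw_Cons: "braid_Tw A d q (i # ws) = braid_T A d q i \<circ> braid_Tw A d q ws"
  by (simp add: braid_Tw_def)

lemma wt_braid_Tw:
  fixes A :: "'i::finite \<Rightarrow> 'i \<Rightarrow> int"
  assumes sc: "simple_cartan A d" and "q \<noteq> 0" "\<forall>j. \<pi> j \<noteq> 0"
  shows "wt (braid_Tw A d q ws \<pi>) = weyl_act A ws (wt \<pi>)"
proof -
  have offdiag: "A j i \<in> {0, -1, -2, -3}" if "j \<noteq> i" for i j
    using simple_cartan_offdiag_cases[OF sc that] by auto
  have "(\<forall>j. braid_Tw A d q ws \<pi> j \<noteq> 0) \<and> wt (braid_Tw A d q ws \<pi>) = weyl_act A ws (wt \<pi>)"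
  proof (induction ws)
    case (Cons i ws)
    thus ?case using wt_braid_T[of A i, OF simple_cartan_diag[OF sc] offdiag \<open>q \<noteq> 0\<close>]
      by (simp add: braid_Tw_Cons)
  qed (simp add: braid_Tw_def assms(3))
  thus ?thesis ..
qed

section \<open>The action on coroots\<close>

text \<open>The Weyl group acts on the coroot lattice, whose elements \<open>g\<close> are written in the basis of
  simple coroots; \<open>\<alpha>\<^sub>i(g) = (\<Sum>k. a\<^sub>k\<^sub>i g\<^sub>k)\<close>.\<close>
definition coroot_refl :: "('i::finite \<Rightarrow> 'i \<Rightarrow> int) \<Rightarrow> 'i \<Rightarrow> ('i \<Rightarrow> int) \<Rightarrow> 'i \<Rightarrow> int" where
  "coroot_refl A i g = (\<lambda>j. if j = i then g j - (\<Sum>k\<in>UNIV. A k i * g k) else g j)"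

definition coroot_act :: "('i::finite \<Rightarrow> 'i \<Rightarrow> int) \<Rightarrow> 'i list \<Rightarrow> ('i \<Rightarrow> int) \<Rightarrow> 'i \<Rightarrow> int" where
  "coroot_act A ws = foldr (\<lambda>i f. coroot_refl A i \<circ> f) ws id"

definition pairing :: "'i::finite weight \<Rightarrow> ('i \<Rightarrow> int) \<Rightarrow> int" where
  "pairing la g = (\<Sum>j\<in>UNIV. la j * g j)"

definition unit_vec :: "'i \<Rightarrow> 'i \<Rightarrow> int" where
  "unit_vec i = (\<lambda>j. if j = i then 1 else 0)"

lemma coroot_act_Nil [simp]: "coroot_act A [] = id"
  by (simp add: coroot_act_def)

lemma coroot_act_Cons [simp]: "coroot_act A (i # ws) = coroot_refl A i \<circ> coroot_act A ws"
  by (simp add: coroot_act_def)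

lemma coroot_act_append: "coroot_act A (xs @ ys) = coroot_act A xs \<circ> coroot_act A ys"
  by (induction xs) auto

lemma pairing_unit_vec_left: "pairing (unit_vec i) g = g i"
proof -
  have "pairing (unit_vec i) g = (\<Sum>j\<in>UNIV. if j = i then g i else 0)"
    unfolding pairing_def by (rule sum.cong) (auto simp: unit_vec_def)
  thus ?thesis by simp
qed

lemma pairing_unit_vec_right: "pairing la (unit_vec i) = la i"
proof -
  have "pairing la (unit_vec i) = (\<Sum>j\<in>UNIV. if j = i then la i else 0)"
    unfolding pairing_def by (rule sum.cong) (auto simp: unit_vec_def)
  thus ?thesis by simp
qed

lemma pairing_srefl_coroot_refl:
  fixes A :: "'i::finite \<Rightarrow> 'i \<Rightarrow> int"
  assumes "A i i = 2"
  shows "pairing (srefl A i la) (coroot_refl A i g) = pairing la g"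
proof -
  define c where "c = (\<Sum>k\<in>UNIV. A k i * g k)"
  have "coroot_refl A i g = (\<lambda>j. g j - (if j = i then c else 0))"
    unfolding coroot_refl_def c_def by auto
  hence "pairing (srefl A i la) (coroot_refl A i g)
      = (\<Sum>j\<in>UNIV. (la j - la i * A j i) * g j) - (\<Sum>j\<in>UNIV. (la j - la i * A j i) * (if j = i then c else 0))"
    unfolding pairing_def srefl_def by (simp add: right_diff_distrib sum_subtractf)
  also have "(\<Sum>j\<in>UNIV. (la j - la i * A j i) * g j) = pairing la g - la i * c"
    unfolding pairing_def c_def by (simp add: algebra_simps sum_subtractf sum_distrib_left)
  also have "(\<Sum>j\<in>UNIV. (la j - la i * A j i) * (if j = i then c else 0)) = (la i - la i * A i i) * c"
    by (simp add: if_distrib cong: if_cong)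
  finally show ?thesis using assms by (simp add: algebra_simps)
qed

lemma pairing_weyl_act_coroot_act:
  fixes A :: "'i::finite \<Rightarrow> 'i \<Rightarrow> int"
  assumes "\<forall>i. A i i = 2"
  shows "pairing (weyl_act A ws la) (coroot_act A ws g) = pairing la g"
  using assms by (induction ws) (auto simp: pairing_srefl_coroot_refl)

lemma coroot_act_cong:
  fixes A :: "'i::finite \<Rightarrow> 'i \<Rightarrow> int"
  assumes diag: "\<forall>i. A i i = 2" and eq: "weyl_act A ws = weyl_act A vs"
  shows "coroot_act A ws = coroot_act A vs"
proof -
  have "coroot_act A us g j = pairing (weyl_act A (rev us) (unit_vec j)) g" for us g j
  proof -
    have "coroot_act A us g j
        = pairing (weyl_act A us (weyl_act A (rev us) (unit_vec j))) (coroot_act A us g)"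
      by (simp add: weyl_act_rev_inverse[of A, OF diag] pairing_unit_vec_left)
    thus ?thesis by (simp add: pairing_weyl_act_coroot_act[of A, OF diag])
  qed
  thus ?thesis by (simp add: fun_eq_iff weyl_act_rev_cong[OF diag eq])
qed

lemma coroot_act_linear:
  "coroot_act A ws (\<lambda>j. a * x j + b * y j) = (\<lambda>j. a * coroot_act A ws x j + b * coroot_act A ws y j)"
proof -
  have "coroot_refl A i (\<lambda>j. a * x j + b * y j) = (\<lambda>j. a * coroot_refl A i x j + b * coroot_refl A i y j)"
    for i x y
    unfolding coroot_refl_def by (auto simp: algebra_simps sum.distrib sum_distrib_left)
  thus ?thesis by (induction ws) auto
qed

lemma coroot_act_uminus: "coroot_act A ws (\<lambda>j. - x j) = (\<lambda>j. - coroot_act A ws x j)"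
  using coroot_act_linear[of A ws "-1" x 0 x] by simp

lemma coroot_refl_unit_vec_self: "A i i = 2 \<Longrightarrow> coroot_refl A i (unit_vec i) = (\<lambda>j. - unit_vec i j)"
  unfolding coroot_refl_def unit_vec_def by (auto simp: if_distrib cong: if_cong)

section \<open>Rank two\<close>

fun alt_word :: "nat \<Rightarrow> 'i \<Rightarrow> 'i \<Rightarrow> 'i list" where
  "alt_word 0 x y = []"
| "alt_word (Suc n) x y = alt_word n y x @ [x]"

lemma set_alt_word: "set (alt_word n x y) \<subseteq> {x, y}"
  by (induction n arbitrary: x y) auto

lemma length_alt_word [simp]: "length (alt_word n x y) = n"
  by (induction n arbitrary: x y) auto

lemma alt_word_add: "\<exists>P. set P \<subseteq> {x, y} \<and> alt_word (n + m) x y = P @ alt_word m x y"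
proof (induction m arbitrary: x y)
  case 0
  show ?case using set_alt_word[of n x y] by auto
next
  case (Suc m)
  then obtain P where "set P \<subseteq> {y, x}" "alt_word (n + m) y x = P @ alt_word m y x" by blast
  thus ?case by auto
qed

lemma stutter_free_two_letters_eq_alt_word:
  assumes "x \<noteq> y" "set u \<subseteq> {x, y}" "stutter_free u" "u \<noteq> []" "last u = x"
  shows "u = alt_word (length u) x y"
  using assms
proof (induction u arbitrary: x y rule: rev_induct)
  case (snoc z u)
  show ?case
  proof (cases "u = []")
    case False
    have "last u \<noteq> x"
    proof
      assume "last u = x"
      hence "u @ [z] = butlast u @ [x, x] @ []"
        using False snoc.prems(5) by (metis append.assoc append_Cons append_Nil append_butlast_last_id last_snoc)
      thus False using snoc.prems(3) unfolding stutter_free_def by blast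
    qed
    hence "last u = y" using snoc.prems(2) False last_in_set by fastforce
    moreover have "set u \<subseteq> {y, x}" using snoc.prems(2) by auto
    moreover have "stutter_free u" using snoc.prems(3) by (rule stutter_free_snocD)
    ultimately have "u = alt_word (length u) y x"
      using snoc.IH[of y x] snoc.prems(1) False by auto
    thus ?thesis using snoc.prems(5) by simp
  qed (use snoc.prems in simp)
qed simp

text \<open>The order of \<open>s\<^sub>s s\<^sub>t\<close> in terms of \<open>a\<^sub>s\<^sub>t a\<^sub>t\<^sub>s \<in> {0, 1, 2, 3}\<close>.\<close>
definition dihedral_order :: "int \<Rightarrow> nat" where
  "dihedral_order p = (if p = 0 then 2 else if p = 1 then 3 else if p = 2 then 4 else 6)"

lemma dihedral_order_gt_0: "0 < dihedral_order p"
  by (simp add: dihedral_order_def)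

text \<open>These weights are permuted by \<open>s\<^sub>s\<close> and \<open>s\<^sub>t\<close>, so braid relations reduce to integer arithmetic.\<close>
definition shift2 :: "('i \<Rightarrow> 'i \<Rightarrow> int) \<Rightarrow> 'i weight \<Rightarrow> 'i \<Rightarrow> 'i \<Rightarrow> int \<Rightarrow> int \<Rightarrow> 'i weight" where
  "shift2 A la s t x y = (\<lambda>j. la j - x * A j s - y * A j t)"

lemma srefl_shift2_left:
  "A s s = 2 \<Longrightarrow> srefl A s (shift2 A la s t x y) = shift2 A la s t (la s - x - y * A s t) y"
  by (auto simp: srefl_def shift2_def algebra_simps)

lemma srefl_shift2_right:
  "A t t = 2 \<Longrightarrow> srefl A t (shift2 A la s t x y) = shift2 A la s t x (la t - x * A t s - y)"
  by (auto simp: srefl_def shift2_def algebra_simps)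

lemma alt_word_braid:
  fixes A :: "'i::finite \<Rightarrow> 'i \<Rightarrow> int"
  assumes sc: "simple_cartan A d" and st: "s \<noteq> t"
  defines "m \<equiv> dihedral_order (A s t * A t s)"
  shows "weyl_act A (alt_word m s t) = weyl_act A (alt_word m t s)"
proof
  fix la
  have la: "la = shift2 A la s t 0 0" by (simp add: shift2_def)
  have diag: "A s s = 2" "A t t = 2" using simple_cartan_diag[OF sc] by auto
  from simple_cartan_offdiag_cases[OF sc st]
  show "weyl_act A (alt_word m s t) la = weyl_act A (alt_word m t s) la"
    unfolding m_def
    by (elim disjE conjE; subst (1 2) la;
        simp add: dihedral_order_def eval_nat_numeral srefl_shift2_left srefl_shift2_right diag;
        simp add: algebra_simps)
qed

lemma alt_word_snoc_shorten:
  fixes A :: "'i::finite \<Rightarrow> 'i \<Rightarrow> int"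
  assumes sc: "simple_cartan A d" and st: "s \<noteq> t" and r: "dihedral_order (A s t * A t s) \<le> r"
  obtains v where "set v \<subseteq> {s, t}" "length v < r" "weyl_act A v = weyl_act A (alt_word r t s @ [s])"
proof -
  define m where "m = dihedral_order (A s t * A t s)"
  obtain m' where m': "m = Suc m'"
    using dihedral_order_gt_0 gr0_implies_Suc unfolding m_def by blast
  obtain P where P: "set P \<subseteq> {t, s}" "alt_word r t s = P @ alt_word m t s"
    using alt_word_add[of t s "r - m" m] r by (auto simp: m_def)
  have "weyl_act A (alt_word r t s @ [s]) = weyl_act A (P @ alt_word m s t @ [s])"
    using P alt_word_braid[OF sc st] by (simp add: weyl_act_append m_def)
  also have "\<dots> = weyl_act A (P @ alt_word m' t s)"
    using simple_cartan_diag[OF sc] by (simp add: m' weyl_act_append srefl_srefl comp_def)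
  finally have "weyl_act A (P @ alt_word m' t s) = weyl_act A (alt_word r t s @ [s])" ..
  moreover have "length (P @ alt_word m' t s) < r"
    using arg_cong[OF P(2), of length] m' by simp
  moreover have "set (P @ alt_word m' t s) \<subseteq> {s, t}"
    using P(1) set_alt_word[of m' t s] by auto
  ultimately show thesis using that by blast
qed

definition comb2 :: "'i \<Rightarrow> 'i \<Rightarrow> int \<Rightarrow> int \<Rightarrow> 'i \<Rightarrow> int" where
  "comb2 s t a b = (\<lambda>j. a * unit_vec s j + b * unit_vec t j)"

definition nonneg_comb2 :: "'i \<Rightarrow> 'i \<Rightarrow> ('i \<Rightarrow> int) \<Rightarrow> bool" where
  "nonneg_comb2 s t g \<longleftrightarrow> (\<exists>a b. 0 \<le> a \<and> 0 \<le> b \<and> g = comb2 s t a b)"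

lemma nonneg_comb2_comb2 [simp]: "0 \<le> a \<Longrightarrow> 0 \<le> b \<Longrightarrow> nonneg_comb2 s t (comb2 s t a b)"
  unfolding nonneg_comb2_def by blast

lemma coroot_refl_comb2_left:
  fixes A :: "'i::finite \<Rightarrow> 'i \<Rightarrow> int"
  assumes "s \<noteq> t" "A s s = 2"
  shows "coroot_refl A s (comb2 s t a b) = comb2 s t (- a - A t s * b) b"
proof -
  have "(\<Sum>k\<in>UNIV. A k s * comb2 s t a b k) = A s s * a + A t s * b"
    using assms(1) by (subst sum_UNIV_two[OF assms(1)]) (auto simp: comb2_def unit_vec_def)
  thus ?thesis using assms unfolding coroot_refl_def by (auto simp: comb2_def unit_vec_def)
qed

lemma coroot_refl_comb2_right:
  fixes A :: "'i::finite \<Rightarrow> 'i \<Rightarrow> int"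
  assumes "s \<noteq> t" "A t t = 2"
  shows "coroot_refl A t (comb2 s t a b) = comb2 s t a (- b - A s t * a)"
proof -
  have "(\<Sum>k\<in>UNIV. A k t * comb2 s t a b k) = A s t * a + A t t * b"
    using assms(1) by (subst sum_UNIV_two[OF assms(1)]) (auto simp: comb2_def unit_vec_def)
  thus ?thesis using assms unfolding coroot_refl_def by (auto simp: comb2_def unit_vec_def)
qed

lemma coroot_act_alt_word_nonneg:
  fixes A :: "'i::finite \<Rightarrow> 'i \<Rightarrow> int"
  assumes sc: "simple_cartan A d" and st: "s \<noteq> t" and r: "r < dihedral_order (A s t * A t s)"
  shows "nonneg_comb2 s t (coroot_act A (alt_word r t s) (unit_vec s))"
proof -
  have diag: "A s s = 2" "A t t = 2" using simple_cartan_diag[OF sc] by auto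
  have init: "unit_vec s = comb2 s t 1 0" by (simp add: comb2_def)
  from simple_cartan_offdiag_cases[OF sc st] r show ?thesis
    by (elim disjE conjE)
      (auto simp: dihedral_order_def less_Suc_eq numeral_eq_Suc init coroot_act_append
          coroot_refl_comb2_left coroot_refl_comb2_right st diag)
qed

lemma dihedral_shortest_ascent:
  fixes A :: "'i::finite \<Rightarrow> 'i \<Rightarrow> int"
  assumes sc: "simple_cartan A d" and st: "s \<noteq> t" and u: "set u \<subseteq> {s, t}"
    and shortest: "length u = word_length A {s, t} (weyl_act A u)"
    and ascent: "length u \<le> word_length A {s, t} (weyl_act A (u @ [s]))"
  shows "u = alt_word (length u) t s" and "length u < dihedral_order (A s t * A t s)"
proof -
  have diag: "\<forall>i. A i i = 2" using simple_cartan_diag[OF sc] by blast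
  have long: "length u \<le> length v" if "set v \<subseteq> {s, t}" "weyl_act A v = weyl_act A (u @ [s])" for v
    using word_length_le[OF that] ascent by simp
  show alt: "u = alt_word (length u) t s"
  proof (cases "u = []")
    case False
    have "last u \<noteq> s"
    proof
      assume "last u = s"
      hence split: "u @ [s] = butlast u @ [s, s] @ []"
        using False by (metis append.assoc append_Cons append_Nil append_butlast_last_id)
      have "weyl_act A (butlast u) = weyl_act A (u @ [s])"
        unfolding split using weyl_act_cancel_square[of A s "butlast u" "[]"] diag by simp
      moreover have "set (butlast u) \<subseteq> {s, t}" using u by (meson in_set_butlastD subsetD subsetI)
      ultimately have "length u \<le> length (butlast u)" using long by blast
      thus False using False by (cases u rule: rev_cases) simp_all
    qed
    hence "last u = t" using u False last_in_set by blast
    moreover have "stutter_free u"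
      using shortest_word_stutter_free[of A, OF diag u shortest] .
    ultimately show ?thesis
      using stutter_free_two_letters_eq_alt_word[of t s u] st u False by (simp add: insert_commute)
  qed simp
  show "length u < dihedral_order (A s t * A t s)"
  proof (rule ccontr)
    assume "\<not> ?thesis"
    then obtain v where v: "set v \<subseteq> {s, t}" "length v < length u"
        "weyl_act A v = weyl_act A (alt_word (length u) t s @ [s])"
      using alt_word_snoc_shorten[OF sc st, of "length u"] by force
    have "length u \<le> length v" using long[OF v(1)] v(3) alt by simp
    thus False using v(2) by simp
  qed
qed

lemma dihedral_coroot_nonneg:
  fixes A :: "'i::finite \<Rightarrow> 'i \<Rightarrow> int"
  assumes sc: "simple_cartan A d" and st: "s \<noteq> t" and u: "set u \<subseteq> {s, t}"
    and ascent: "word_length A {s, t} (weyl_act A u) \<le> word_length A {s, t} (weyl_act A (u @ [s]))"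
  shows "nonneg_comb2 s t (coroot_act A u (unit_vec s))"
proof -
  obtain u' where u': "set u' \<subseteq> {s, t}" "length u' = word_length A {s, t} (weyl_act A u)"
    "weyl_act A u' = weyl_act A u"
    using shortest_word_exists[OF u] by blast
  have "length u' \<le> word_length A {s, t} (weyl_act A (u' @ [s]))"
    using ascent u'(2,3) by (simp add: weyl_act_append)
  note u'_alt = dihedral_shortest_ascent[OF sc st u'(1) _ this]
  have "coroot_act A u = coroot_act A (alt_word (length u') t s)"
    using coroot_act_cong[of A, OF _ u'(3)] simple_cartan_diag[OF sc] u'_alt(1) u'(2,3) by metis
  thus ?thesis using coroot_act_alt_word_nonneg[OF sc st u'_alt(2)] u'(2,3) by simp
qed

section \<open>Positivity of coroots and stabilizers of dominant weights\<close>

lemma minimal_dihedral_factorization: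
  assumes diag: "\<forall>i. A i i = 2" and u0: "set u0 \<subseteq> {s, t}"
    and w: "weyl_act A w = weyl_act A (v0 @ u0)"
    and bound: "weyl_length A v0 + word_length A {s, t} (weyl_act A u0) \<le> n"
  obtains v u where "set u \<subseteq> {s, t}" "weyl_act A w = weyl_act A (v @ u)"
    "weyl_length A v + word_length A {s, t} (weyl_act A u) \<le> n"
    "weyl_length A v \<le> weyl_length A v0"
    "\<And>x. x \<in> {s, t} \<Longrightarrow> weyl_length A v \<le> weyl_length A (v @ [x])"
proof -
  define C where "C = {v. \<exists>u. set u \<subseteq> {s, t} \<and> weyl_act A w = weyl_act A (v @ u)
    \<and> weyl_length A v + word_length A {s, t} (weyl_act A u) \<le> n}"
  have "v0 \<in> C" unfolding C_def using u0 w bound by blast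
  then obtain v where "v \<in> C" and least: "\<And>v'. v' \<in> C \<Longrightarrow> weyl_length A v \<le> weyl_length A v'"
    using ex_has_least_nat[of "\<lambda>v. v \<in> C" v0 "weyl_length A"] by blast
  then obtain u where u: "set u \<subseteq> {s, t}" "weyl_act A w = weyl_act A (v @ u)"
    "weyl_length A v + word_length A {s, t} (weyl_act A u) \<le> n"
    unfolding C_def by blast
  have "weyl_length A v \<le> weyl_length A (v @ [x])" if x: "x \<in> {s, t}" for x
  proof (rule ccontr)
    assume shorter: "\<not> ?thesis"
    have "weyl_act A w = weyl_act A ((v @ [x]) @ (x # u))"
      using weyl_act_cancel_square[of A x v u] diag u(2) by simp
    moreover have "set (x # u) \<subseteq> {s, t}" using u(1) x by simp
    moreover have "weyl_length A (v @ [x]) + word_length A {s, t} (weyl_act A (x # u)) \<le> n"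
      using word_length_Cons_le[OF u(1) x, of A] shorter u(3) by linarith
    ultimately have "v @ [x] \<in> C" unfolding C_def by blast
    hence "weyl_length A v \<le> weyl_length A (v @ [x])" by (rule least)
    thus False using shorter by simp
  qed
  thus thesis using that[OF u least[OF \<open>v0 \<in> C\<close>]] by blast
qed

lemma coroot_act_dihedral_step:
  fixes A :: "'i::finite \<Rightarrow> 'i \<Rightarrow> int"
  assumes sc: "simple_cartan A d" and st: "s \<noteq> t"
    and ws: "weyl_act A ws = weyl_act A (w0 @ [t])" and len_w0: "weyl_length A w0 < weyl_length A ws"
    and ascent: "weyl_length A ws \<le> weyl_length A (ws @ [s])"
  obtains v a b where "weyl_length A v < weyl_length A ws"
    "\<And>x. x \<in> {s, t} \<Longrightarrow> weyl_length A v \<le> weyl_length A (v @ [x])" "0 \<le> a" "0 \<le> b"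
    "coroot_act A ws (unit_vec s)
      = (\<lambda>j. a * coroot_act A v (unit_vec s) j + b * coroot_act A v (unit_vec t) j)"
proof -
  have diag: "\<forall>i. A i i = 2" using simple_cartan_diag[OF sc] by blast
  have bound: "weyl_length A w0 + word_length A {s, t} (weyl_act A [t]) \<le> weyl_length A ws"
    using len_w0 word_length_le[of "[t]" "{s, t}" A] by simp
  have t: "set [t] \<subseteq> {s, t}" by simp
  obtain v u where u: "set u \<subseteq> {s, t}" "weyl_act A ws = weyl_act A (v @ u)"
      "weyl_length A v + word_length A {s, t} (weyl_act A u) \<le> weyl_length A ws"
    and len_v: "weyl_length A v \<le> weyl_length A w0"
    and v_ascent: "\<And>x. x \<in> {s, t} \<Longrightarrow> weyl_length A v \<le> weyl_length A (v @ [x])"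
    by (rule minimal_dihedral_factorization[of A "[t]" s t ws w0, OF diag t ws bound]) blast
  have u_ascent: "word_length A {s, t} (weyl_act A u) \<le> word_length A {s, t} (weyl_act A (u @ [s]))"
  proof (rule ccontr)
    assume descent: "\<not> ?thesis"
    have "weyl_length A (ws @ [s]) = weyl_length A (v @ u @ [s])"
      using u(2) by (simp add: weyl_act_append comp_assoc)
    also have "\<dots> \<le> weyl_length A v + weyl_length A (u @ [s])"
      by (rule weyl_length_append)
    also have "weyl_length A (u @ [s]) \<le> word_length A {s, t} (weyl_act A (u @ [s]))"
      using u(1) by (intro weyl_length_le_word_length) simp
    finally show False using descent u(3) ascent by linarith
  qed
  obtain a b where ab: "0 \<le> a" "0 \<le> b" "coroot_act A u (unit_vec s) = comb2 s t a b"
    using dihedral_coroot_nonneg[OF sc st u(1) u_ascent] unfolding nonneg_comb2_def by blast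
  have "coroot_act A ws = coroot_act A (v @ u)" using coroot_act_cong[of A, OF diag u(2)] .
  hence "coroot_act A ws (unit_vec s)
      = (\<lambda>j. a * coroot_act A v (unit_vec s) j + b * coroot_act A v (unit_vec t) j)"
    using ab(3) by (simp add: coroot_act_append comb2_def coroot_act_linear)
  moreover have "weyl_length A v < weyl_length A ws" using len_v len_w0 by simp
  ultimately show thesis using that v_ascent ab(1,2) by blast
qed

lemma coroot_act_nonneg:
  fixes A :: "'i::finite \<Rightarrow> 'i \<Rightarrow> int"
  assumes sc: "simple_cartan A d" and ascent: "weyl_length A ws \<le> weyl_length A (ws @ [s])"
  shows "0 \<le> coroot_act A ws (unit_vec s) j"
  using ascent
proof (induction "weyl_length A ws" arbitrary: ws s j rule: less_induct)
  case less
  have diag: "\<forall>i. A i i = 2" using simple_cartan_diag[OF sc] by blast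
  obtain wr where wr: "length wr = weyl_length A ws" "weyl_act A wr = weyl_act A ws"
    using shortest_word_exists[of ws UNIV] by blast
  show ?case
  proof (cases wr rule: rev_cases)
    case Nil
    hence "coroot_act A ws = coroot_act A []"
      using coroot_act_cong[of A, OF diag] wr(2) by metis
    thus ?thesis by (simp add: unit_vec_def)
  next
    case (snoc w0 t)
    have len_w0: "weyl_length A w0 < weyl_length A ws"
      using word_length_le[of w0 UNIV A "weyl_act A w0"] wr(1) snoc by simp
    have ws: "weyl_act A ws = weyl_act A (w0 @ [t])" using wr(2) snoc by simp
    have "s \<noteq> t"
    proof
      assume "s = t"
      hence "weyl_act A (ws @ [s]) = weyl_act A w0"
        using weyl_act_cancel_square[of A t w0 "[]"] diag ws by (simp add: weyl_act_append comp_assoc)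
      thus False using less.prems len_w0 by simp
    qed
    then obtain v a b where "weyl_length A v < weyl_length A ws"
      and "\<And>x. x \<in> {s, t} \<Longrightarrow> weyl_length A v \<le> weyl_length A (v @ [x])" and "0 \<le> a" "0 \<le> b"
      and "coroot_act A ws (unit_vec s)
        = (\<lambda>j. a * coroot_act A v (unit_vec s) j + b * coroot_act A v (unit_vec t) j)"
      using coroot_act_dihedral_step[OF sc _ ws len_w0 less.prems] by blast
    thus ?thesis using less.hyps by simp
  qed
qed

lemma coroot_act_nonpos:
  fixes A :: "'i::finite \<Rightarrow> 'i \<Rightarrow> int"
  assumes sc: "simple_cartan A d" and descent: "weyl_length A (ws @ [s]) < weyl_length A ws"
  shows "coroot_act A ws (unit_vec s) j \<le> 0"
proof -
  have "weyl_act A ((ws @ [s]) @ [s]) = weyl_act A ws"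
    using weyl_act_cancel_square[of A s ws "[]"] simple_cartan_diag[OF sc] by simp
  hence "0 \<le> coroot_act A (ws @ [s]) (unit_vec s) j"
    using descent by (intro coroot_act_nonneg[OF sc]) simp
  moreover have "coroot_act A (ws @ [s]) (unit_vec s) = (\<lambda>j. - coroot_act A ws (unit_vec s) j)"
    using simple_cartan_diag[OF sc]
    by (simp add: coroot_act_append coroot_refl_unit_vec_self coroot_act_uminus)
  ultimately show ?thesis by simp
qed

lemma dominant_reduced_word_letters:
  fixes A :: "'i::finite \<Rightarrow> 'i \<Rightarrow> int"
  assumes sc: "simple_cartan A d" and "length ws = weyl_length A ws"
    and "dominant la" and "dominant (weyl_act A ws la)"
  shows "set ws \<subseteq> {i. la i = 0}"
  using assms(2-)
proof (induction ws rule: rev_induct)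
  case (snoc i ws)
  have diag: "\<forall>i. A i i = 2" using simple_cartan_diag[OF sc] by blast
  have reduced: "length ws = weyl_length A ws"
  proof (rule antisym)
    show "weyl_length A ws \<le> length ws" by (rule word_length_le) simp_all
    obtain r where "length r = weyl_length A ws" "weyl_act A r = weyl_act A ws"
      using shortest_word_exists[of ws UNIV] by blast
    hence "weyl_length A (ws @ [i]) \<le> length (r @ [i])"
      by (intro word_length_le) (simp_all add: weyl_act_append)
    thus "length ws \<le> weyl_length A ws" using snoc.prems(1) \<open>length r = _\<close> by simp
  qed
  have "weyl_act A ((ws @ [i]) @ [i]) = weyl_act A ws"
    using weyl_act_cancel_square[of A i ws "[]"] diag by simp
  hence descent: "weyl_length A ((ws @ [i]) @ [i]) < weyl_length A (ws @ [i])"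
    using reduced snoc.prems(1) by simp
  have "la i = pairing la (unit_vec i)" by (simp add: pairing_unit_vec_right)
  also have "\<dots> = pairing (weyl_act A (ws @ [i]) la) (coroot_act A (ws @ [i]) (unit_vec i))"
    by (rule pairing_weyl_act_coroot_act[of A, OF diag, symmetric])
  also have "\<dots> \<le> 0"
    unfolding pairing_def using snoc.prems(3) coroot_act_nonpos[OF sc descent]
    by (auto intro!: sum_nonpos mult_nonneg_nonpos simp: dominant_def)
  finally have "la i = 0" using snoc.prems(2) unfolding dominant_def by (meson antisym)
  hence "srefl A i la = la" by (simp add: srefl_def)
  hence "set ws \<subseteq> {i. la i = 0}"
    using snoc.IH[OF reduced snoc.prems(2)] snoc.prems(3) by (simp add: weyl_act_append)
  thus ?case using \<open>la i = 0\<close> by simp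
qed simp

lemma weyl_act_fix_zero_letters:
  "set ws \<subseteq> {i. la i = 0} \<Longrightarrow> weyl_act A ws la = la"
  by (induction ws) (auto simp: srefl_def)

lemma dominant_weyl_act_dominant:
  fixes A :: "'i::finite \<Rightarrow> 'i \<Rightarrow> int"
  assumes sc: "simple_cartan A d" and "dominant la" and "dominant (weyl_act A ws la)"
  shows "weyl_act A ws la = la" and "in_stab_subgroup A la ws"
proof -
  obtain u where u: "length u = weyl_length A ws" "weyl_act A u = weyl_act A ws"
    using shortest_word_exists[of ws UNIV] by blast
  have "set u \<subseteq> {i. la i = 0}"
    using dominant_reduced_word_letters[OF sc _ assms(2)] u assms(3) by simp
  thus "weyl_act A ws la = la" and "in_stab_subgroup A la ws"
    using u(2) weyl_act_fix_zero_letters[of u la A] unfolding in_stab_subgroup_def by auto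
qed

theorem lemma2p5:
  fixes A :: "'i::finite \<Rightarrow> 'i \<Rightarrow> int" and d :: "'i \<Rightarrow> nat" and q :: complex
  assumes "simple_cartan A d"
    and "q \<noteq> 0" and "\<forall>n::nat. n > 0 \<longrightarrow> q ^ n \<noteq> 1"
  shows "(\<forall>ws \<pi>. reduced_word A ws \<and> in_Pq \<pi> \<longrightarrow>
            wt (braid_Tw A d q ws \<pi>) = weyl_act A ws (wt \<pi>))
       \<and> (\<forall>\<pi>1 \<pi>2 ws1 ws2. in_Pq \<pi>1 \<and> in_Pq \<pi>2 \<and> dominant (wt \<pi>1) \<and> dominant (wt \<pi>2)
            \<and> reduced_word A ws1 \<and> reduced_word A ws2
            \<and> braid_Tw A d q ws1 \<pi>1 = braid_Tw A d q ws2 \<pi>2 \<longrightarrow>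
              wt \<pi>1 = wt \<pi>2 \<and> in_stab_subgroup A (wt \<pi>1) (rev ws1 @ ws2))"
proof -
  have diag: "\<forall>i. A i i = 2" using simple_cartan_diag[OF assms(1)] by blast
  have wt_Tw: "wt (braid_Tw A d q ws \<pi>) = weyl_act A ws (wt \<pi>)" if "in_Pq \<pi>" for ws \<pi>
    using wt_braid_Tw[OF assms(1,2)] that in_A_nonzero unfolding in_Pq_def by blast
  have "wt \<pi>1 = wt \<pi>2 \<and> in_stab_subgroup A (wt \<pi>1) (rev ws1 @ ws2)"
    if "in_Pq \<pi>1" "in_Pq \<pi>2" "dominant (wt \<pi>1)" "dominant (wt \<pi>2)"
      "braid_Tw A d q ws1 \<pi>1 = braid_Tw A d q ws2 \<pi>2" for \<pi>1 \<pi>2 ws1 ws2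
  proof -
    have "weyl_act A ws1 (wt \<pi>1) = weyl_act A ws2 (wt \<pi>2)" using that wt_Tw by metis
    hence "weyl_act A (rev ws1 @ ws2) (wt \<pi>2) = wt \<pi>1"
      using weyl_act_rev_inverse(2)[of A ws1 "wt \<pi>1", OF diag] by (simp add: weyl_act_append)
    thus ?thesis
      using dominant_weyl_act_dominant[OF assms(1) that(4), of "rev ws1 @ ws2"] that(3) by simp
  qed
  thus ?thesis using wt_Tw by blast
qed

end
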